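(* Let $(V,\mathcal H,\iota,W)$ be a generalized functional theory. The dimension of the set $\iota^*(\mathcal E)$ of ensemble-state-representable densities equals $\dim V-\dim\iota^{-1}(\mathrm{span}\{\mathbb 1\})$. In particular $\iota^*(\mathcal E)$ has full dimension in $V^*$ if and only if $\iota$ is injective and $\mathbb 1$ is not in the image of $\iota$; precisely, $\mathrm{aff}(\iota^*(\mathcal E))=V^*$ if and only if $\iota^{-1}(\mathrm{span}\{\mathbb 1\})=0$.
   Context: A generalized functional theory is a tuple $(V,\mathcal H,\iota,W)$ with $V$ a finite-dimensional real vector space, $\mathcal H$ a finite-dimensional complex Hilbert space, $\iota:V\to i\mathfrak u(\mathcal H)$ a linear map into the Hermitian operators, and $W$ Hermitian. Density operators are regarded as elements of $(i\mathfrak u(\mathcal H))^*$ via the trace pairing; $\iota^*$ is the dual map. $\mathcal E$ is the set of density operators, $\mathbb 1$ the identity on $\mathcal H$, and $\mathrm{aff}$ the affine hull. *)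

theory Defs
  imports "HOL-Analysis.Analysis"
begin

definition hermitian_op :: "complex^'n^'n \<Rightarrow> bool" where
  "hermitian_op A \<longleftrightarrow> (\<forall>i j. A$i$j = cnj (A$j$i))"

definition density_op :: "complex^'n^'n \<Rightarrow> bool" where
  "density_op \<rho> \<longleftrightarrow> hermitian_op \<rho>
     \<and> (\<forall>x::complex^'n. \<exists>r::real. r \<ge> 0 \<and> (\<Sum>i\<in>UNIV. cnj (x$i) * (\<rho> *v x)$i) = of_real r)
     \<and> trace \<rho> = 1"

definition density_ops :: "(complex^'n^'n) set" where
  "density_ops = {\<rho>. density_op \<rho>}"

text \<open>Generalized functional theory (V, H, iota, W) with V = real^'k,
  H = complex^'n: iota real-linear with Hermitian values, W Hermitian.\<close>
definition gen_functional_theory :: "(real^'k \<Rightarrow> complex^'n^'n) \<Rightarrow> complex^'n^'n \<Rightarrow> bool" where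
  "gen_functional_theory \<iota> W \<longleftrightarrow> linear \<iota> \<and> (\<forall>v. hermitian_op (\<iota> v)) \<and> hermitian_op W"

text \<open>Dual map iota^* applied to a density operator rho, i.e. the functional
  v \<mapsto> tr(rho iota(v)) in V^*, written in coordinates w.r.t. the dual of the
  standard basis of V = real^'k (so V^* is identified with real^'k).\<close>
definition iota_star :: "(real^'k \<Rightarrow> complex^'n^'n) \<Rightarrow> complex^'n^'n \<Rightarrow> real^'k" where
  "iota_star \<iota> \<rho> = (\<chi> i. Re (trace (\<rho> ** \<iota> (axis i 1))))"

end

theory Submission
  imports Defs
begin

(*
  Fix a density operator \<sigma>. The affine dimension of \<iota>\<^sup>*(\<E>) is the dimension of the span of
  the differences \<iota>\<^sup>*(\<rho>) - \<iota>\<^sup>*(\<sigma>), i.e. dim V minus the dimension of its orthogonal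
  complement, and v lies in that complement iff tr(\<rho> \<iota>(v)) is the same for all density operators.
  Testing on the pure states of e_i, (e_i + e_j)/\<surd>2 and (e_i + i e_j)/\<surd>2 shows that a Hermitian
  operator with the same expectation value in every state is a real multiple of the identity; the
  converse holds because states have trace 1. So the complement is the preimage K of span {1}
  under \<iota>, and as the identity is nonzero, K = 0 iff \<iota> is injective and misses the identity.
*)

lemma norm_axis: "norm (axis i x) = norm (x::'a::real_inner)"
  unfolding norm_eq_sqrt_inner inner_axis_axis by simp

lemma norm_axis_add_axis:
  assumes "i \<noteq> j"
  shows "(norm (axis i x + axis j y))\<^sup>2 = (norm x)\<^sup>2 + (norm (y::'a::real_inner))\<^sup>2"
  using assms by (simp add: norm_add_Pythagorean orthogonal_def inner_axis_axis norm_axis)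

lemma norm_power2_vec_complex: "(norm (u::complex^'n))\<^sup>2 = (\<Sum>i\<in>UNIV. (cmod (u$i))\<^sup>2)"
  by (simp add: norm_vec_def L2_set_def sum_nonneg)

lemma matrix_vector_mult_axis: "((B::'a::semiring_1^'n^'m) *v axis i x)$k = B$k$i * x"
  by (simp add: matrix_vector_mult_def axis_def if_distrib[of "times _"] cong: if_cong)

lemma trace_scaleR: "trace (c *\<^sub>R A) = c *\<^sub>R trace (A :: 'a::real_algebra_1^'n^'n)"
  by (simp add: trace_def scaleR_sum_right)

lemma inner_vec_lambda_linear_axis:
  fixes f :: "real^'k \<Rightarrow> real"
  assumes "linear f"
  shows "(\<chi> i. f (axis i 1)) \<bullet> v = f v"
proof -
  have "f v = f (\<Sum>i\<in>UNIV. v$i *\<^sub>R axis i 1)"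
    using basis_expansion[of v] by (simp add: scalar_mult_eq_scaleR)
  also have "\<dots> = (\<Sum>i\<in>UNIV. v$i * f (axis i 1))"
    using assms by (simp add: linear_sum linear_scale)
  finally show ?thesis
    by (simp add: inner_vec_def mult.commute)
qed

lemma aff_dim_add_dim_orthogonal_differences:
  fixes S :: "'a::euclidean_space set"
  assumes "a \<in> S"
  shows "aff_dim S + int (dim {y. \<forall>x\<in>S. x \<bullet> y = a \<bullet> y}) = int DIM('a)"
proof -
  define D where "D = (\<lambda>x. x - a) ` S"
  have "{y. \<forall>x\<in>S. x \<bullet> y = a \<bullet> y} = {y \<in> UNIV. \<forall>x \<in> span D. orthogonal x y}"
  proof (intro set_eqI iffI)
    fix y assume "y \<in> {y. \<forall>x\<in>S. x \<bullet> y = a \<bullet> y}"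
    then have "orthogonal y d" if "d \<in> D" for d
      using that by (auto simp: D_def orthogonal_def inner_diff_right inner_commute)
    then have "orthogonal y x" if "x \<in> span D" for x
      using orthogonal_to_span[OF that] by blast
    then show "y \<in> {y \<in> UNIV. \<forall>x \<in> span D. orthogonal x y}"
      by (simp add: orthogonal_commute)
  next
    fix y assume y: "y \<in> {y \<in> UNIV. \<forall>x \<in> span D. orthogonal x y}"
    have "orthogonal (x - a) y" if "x \<in> S" for x
      using y span_base[of "x - a" D] that by (simp add: D_def)
    then show "y \<in> {y. \<forall>x\<in>S. x \<bullet> y = a \<bullet> y}"
      by (simp add: orthogonal_def inner_diff_left)
  qed
  moreover have "dim {y \<in> UNIV. \<forall>x \<in> span D. orthogonal x y} + dim (span D) = dim (UNIV :: 'a set)"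
    by (rule dim_subspace_orthogonal_to_vectors) (simp_all add: subspace_span)
  moreover have "aff_dim S = int (dim D)"
    unfolding D_def by (rule aff_dim_eq_dim_subtract) (rule hull_inc[OF assms])
  ultimately show ?thesis
    by simp
qed

lemma linear_preimage_line_eq_0_iff:
  fixes f :: "'a::real_vector \<Rightarrow> 'b::real_vector"
  assumes lin: "linear f" and "e \<noteq> 0"
  shows "{v. \<exists>c. f v = c *\<^sub>R e} = {0} \<longleftrightarrow> inj f \<and> e \<notin> range f"
proof
  assume K: "{v. \<exists>c. f v = c *\<^sub>R e} = {0}"
  have "inj f"
    unfolding linear_inj_iff_eq_0[OF lin]
  proof (intro allI impI)
    fix v assume "f v = 0"
    then have "f v = 0 *\<^sub>R e" by simp
    then show "v = 0" using K by blast
  qed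
  moreover have "e \<notin> range f"
  proof
    assume "e \<in> range f"
    then obtain v where v: "f v = e" by blast
    then have "f v = 1 *\<^sub>R e" by simp
    then have "v = 0" using K by blast
    then show False using v \<open>e \<noteq> 0\<close> linear_0[OF lin] by simp
  qed
  ultimately show "inj f \<and> e \<notin> range f" ..
next
  assume inj: "inj f \<and> e \<notin> range f"
  have "v = 0" if "f v = c *\<^sub>R e" for v c
  proof (cases "c = 0")
    case True
    then show ?thesis
      using that inj linear_inj_iff_eq_0[OF lin] by simp
  next
    case False
    then have "f (v /\<^sub>R c) = e"
      using that linear_scale[OF lin] by simp
    then show ?thesis using inj by blast
  qed
  moreover have "f 0 = 0 *\<^sub>R e"
    using linear_0[OF lin] by simp
  ultimately show "{v. \<exists>c. f v = c *\<^sub>R e} = {0}"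
    by blast
qed

definition rank_one :: "complex^'n \<Rightarrow> complex^'n^'n" where
  "rank_one u = (\<chi> a b. u$a * cnj (u$b))"

definition quad_form :: "complex^'n^'n \<Rightarrow> complex^'n \<Rightarrow> complex" where
  "quad_form B u = (\<Sum>i\<in>UNIV. cnj (u$i) * (B *v u)$i)"

lemma trace_rank_one_mult: "trace (rank_one u ** B) = quad_form B u"
proof -
  have "trace (rank_one u ** B) = (\<Sum>i\<in>UNIV. \<Sum>k\<in>UNIV. cnj (u$k) * (B$k$i * u$i))"
    unfolding trace_def rank_one_def matrix_matrix_mult_def by (simp add: mult_ac)
  also have "\<dots> = (\<Sum>k\<in>UNIV. \<Sum>i\<in>UNIV. cnj (u$k) * (B$k$i * u$i))"
    by (rule sum.swap)
  finally show ?thesis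
    unfolding quad_form_def matrix_vector_mult_def by (simp add: sum_distrib_left)
qed

lemma quad_form_rank_one: "quad_form (rank_one u) x = of_real ((cmod (\<Sum>j\<in>UNIV. cnj (u$j) * x$j))\<^sup>2)"
proof -
  define w where "w = (\<Sum>j\<in>UNIV. cnj (u$j) * x$j)"
  have "quad_form (rank_one u) x = (\<Sum>i\<in>UNIV. cnj (x$i) * u$i) * w"
    unfolding quad_form_def rank_one_def matrix_vector_mult_def w_def
    by (simp add: sum_distrib_left sum_distrib_right mult_ac) (rule sum.swap)
  also have "(\<Sum>i\<in>UNIV. cnj (x$i) * u$i) = cnj w"
    unfolding w_def by (simp add: mult.commute)
  finally show ?thesis
    unfolding w_def[symmetric] by (metis complex_norm_square mult.commute)
qed

lemma trace_rank_one: "trace (rank_one u) = of_real ((norm u)\<^sup>2)"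
  unfolding norm_power2_vec_complex of_real_sum complex_norm_square trace_def rank_one_def by simp

lemma density_op_rank_one:
  assumes "norm u = 1"
  shows "density_op (rank_one u)"
  unfolding density_op_def
proof (intro conjI allI)
  show "hermitian_op (rank_one u)"
    unfolding hermitian_op_def rank_one_def by (simp add: mult.commute)
  show "\<exists>r\<ge>0. (\<Sum>i\<in>UNIV. cnj (x$i) * (rank_one u *v x)$i) = of_real r" for x
    using quad_form_rank_one[of u x] unfolding quad_form_def by (metis zero_le_power2)
  show "trace (rank_one u) = 1"
    using assms by (simp add: trace_rank_one)
qed

lemma density_ops_nonempty: "(density_ops :: (complex^'n^'n) set) \<noteq> {}"
proof -
  have "rank_one (axis i 1) \<in> density_ops" for i :: "'n::finite"
    unfolding density_ops_def by (simp add: density_op_rank_one norm_axis)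
  then show ?thesis by blast
qed

lemma quad_form_axis: "quad_form B (axis i x) = cnj x * B$i$i * x"
  unfolding quad_form_def matrix_vector_mult_axis
  by (simp add: axis_def if_distrib[of cnj] if_distrib[of "\<lambda>y. y * _"] cong: if_cong)

lemma quad_form_axis_add_axis:
  assumes "i \<noteq> j"
  shows "quad_form B (axis i x + axis j y)
    = cnj x * (B$i$i * x + B$i$j * y) + cnj y * (B$j$i * x + B$j$j * y)"
  unfolding quad_form_def matrix_vector_right_distrib vector_add_component matrix_vector_mult_axis
  using assms
  by (simp add: axis_def distrib_right sum.distrib if_distrib[of cnj] if_distrib[of "\<lambda>y. y * _"]
      cong: if_cong)

lemma hermitian_eq_scalar_mat_if_Re_quad_form_const:
  fixes B :: "complex^'n^'n"
  assumes herm: "hermitian_op B"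
    and const: "\<And>u. norm u = 1 \<Longrightarrow> Re (quad_form B u) = c"
  shows "B = c *\<^sub>R mat 1"
proof -
  have cnj_entry: "B$j$i = cnj (B$i$j)" for i j
    using herm unfolding hermitian_op_def by blast
  have diag: "B$i$i = of_real c" for i
  proof -
    have "Re (B$i$i) = c"
      using const[of "axis i 1"] by (simp add: norm_axis quad_form_axis)
    moreover have "Im (B$i$i) = 0"
      using arg_cong[OF cnj_entry[of i i], of Im] by simp
    ultimately show ?thesis by (simp add: complex_eq_iff)
  qed
  have off_diag: "B$i$j = 0" if "i \<noteq> j" for i j
  proof -
    define s where "s = complex_of_real (1 / sqrt 2)"
    have s: "cnj s = s" "s * s = 1/2"
      unfolding s_def by (simp_all flip: of_real_mult)
    have norm_s: "(norm s)\<^sup>2 = 1/2"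
      unfolding s_def norm_of_real by (simp add: power_divide)
    have unit: "norm (axis i s + axis j y) = 1" if "norm y = norm s" for y
    proof -
      have "(norm (axis i s + axis j y))\<^sup>2 = 1"
        using norm_axis_add_axis[OF \<open>i \<noteq> j\<close>, of s y] that norm_s by simp
      then show ?thesis
        using norm_ge_zero[of "axis i s + axis j y"] by (auto simp: power2_eq_1_iff)
    qed
    have "quad_form B (axis i s + axis j s) = (s * s) * (2 * of_real c + B$i$j + cnj (B$i$j))"
      unfolding quad_form_axis_add_axis[OF \<open>i \<noteq> j\<close>] diag cnj_entry[of i j] s(1)
      by (simp add: algebra_simps)
    then have re: "Re (B$i$j) = 0"
      using const[OF unit[of s]] by (simp only: s(2)) simp
    have "quad_form B (axis i s + axis j (\<i> * s))
        = (s * s) * (2 * of_real c + \<i> * (B$i$j - cnj (B$i$j)))"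
      unfolding quad_form_axis_add_axis[OF \<open>i \<noteq> j\<close>] diag cnj_entry[of i j] complex_cnj_mult s(1)
      by (simp add: algebra_simps)
    then have im: "Im (B$i$j) = 0"
      using const[OF unit[of "\<i> * s"]] by (simp only: s(2)) (simp add: norm_mult)
    show ?thesis using re im by (simp add: complex_eq_iff)
  qed
  show ?thesis
    by (simp add: vec_eq_iff mat_def diag off_diag complex_eq_iff)
qed

lemma Re_trace_mult_scalar_mat:
  assumes "trace \<rho> = 1"
  shows "Re (trace (\<rho> ** (c *\<^sub>R mat 1))) = c"
  using assms by (simp add: matrix_scalar_ac trace_scaleR)

lemma Re_trace_mult_const_on_density_ops_iff:
  fixes B \<sigma> :: "complex^'n^'n"
  assumes herm: "hermitian_op B" and \<sigma>: "density_op \<sigma>"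
  shows "(\<forall>\<rho>. density_op \<rho> \<longrightarrow> Re (trace (\<rho> ** B)) = Re (trace (\<sigma> ** B)))
    \<longleftrightarrow> (\<exists>c::real. B = c *\<^sub>R mat 1)"
proof
  assume "\<forall>\<rho>. density_op \<rho> \<longrightarrow> Re (trace (\<rho> ** B)) = Re (trace (\<sigma> ** B))"
  then have "Re (quad_form B u) = Re (trace (\<sigma> ** B))" if "norm u = 1" for u
    using density_op_rank_one[OF that] by (simp flip: trace_rank_one_mult)
  then show "\<exists>c::real. B = c *\<^sub>R mat 1"
    using hermitian_eq_scalar_mat_if_Re_quad_form_const[OF herm] by blast
next
  assume "\<exists>c::real. B = c *\<^sub>R mat 1"
  then show "\<forall>\<rho>. density_op \<rho> \<longrightarrow> Re (trace (\<rho> ** B)) = Re (trace (\<sigma> ** B))"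
    using \<sigma> by (auto simp: density_op_def Re_trace_mult_scalar_mat)
qed

lemma linear_Re_trace_mult: "linear (\<lambda>M::complex^'n^'n. Re (trace (\<rho> ** M)))"
  by (rule linearI)
    (simp_all add: matrix_add_ldistrib trace_add matrix_scalar_ac trace_scaleR flip: scalar_matrix_assoc)

lemma iota_star_inner:
  assumes "linear \<iota>"
  shows "iota_star \<iota> \<rho> \<bullet> v = Re (trace (\<rho> ** \<iota> v))"
  unfolding iota_star_def
  using inner_vec_lambda_linear_axis[OF linear_compose[OF assms linear_Re_trace_mult]]
  by (simp add: o_def)

theorem proposition2p12:
  fixes \<iota> :: "real^'k \<Rightarrow> complex^'n^'n" and W :: "complex^'n^'n"
  assumes "gen_functional_theory \<iota> W"
  shows "aff_dim (iota_star \<iota> ` density_ops)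
           = int (CARD('k)) - int (dim {v. \<exists>c::real. \<iota> v = c *\<^sub>R mat 1})
         \<and> ((affine hull (iota_star \<iota> ` density_ops) = UNIV)
           \<longleftrightarrow> (inj \<iota> \<and> mat 1 \<notin> range \<iota>))
         \<and> ((affine hull (iota_star \<iota> ` density_ops) = UNIV)
           \<longleftrightarrow> {v. \<exists>c::real. \<iota> v = c *\<^sub>R mat 1} = {0})"
proof -
  have lin: "linear \<iota>" and herm: "\<And>v. hermitian_op (\<iota> v)"
    using assms unfolding gen_functional_theory_def by auto
  define S where "S = iota_star \<iota> ` density_ops"
  define K where "K = {v. \<exists>c::real. \<iota> v = c *\<^sub>R mat 1}"
  obtain \<sigma> :: "complex^'n^'n" where \<sigma>: "density_op \<sigma>"
    using density_ops_nonempty unfolding density_ops_def by blast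
  have "{y. \<forall>x\<in>S. x \<bullet> y = iota_star \<iota> \<sigma> \<bullet> y} = K"
    using Re_trace_mult_const_on_density_ops_iff[OF herm \<sigma>]
    by (simp add: S_def K_def density_ops_def iota_star_inner[OF lin])
  then have dim: "aff_dim S = int CARD('k) - int (dim K)"
    using aff_dim_add_dim_orthogonal_differences[of "iota_star \<iota> \<sigma>" S] \<sigma>
    by (simp add: S_def density_ops_def)
  have "0 \<in> K"
    unfolding K_def using linear_0[OF lin] by simp
  then have full: "affine hull S = UNIV \<longleftrightarrow> K = {0}"
    using aff_dim_eq_full[of S] dim by auto
  have "(mat 1 :: complex^'n^'n) \<noteq> 0"
    by (auto simp: vec_eq_iff mat_def)
  then have "K = {0} \<longleftrightarrow> inj \<iota> \<and> mat 1 \<notin> range \<iota>"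
    unfolding K_def by (rule linear_preimage_line_eq_0_iff[OF lin])
  then show ?thesis
    using dim full unfolding S_def K_def by simp
qed

end
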